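(* Let $n_x, d \in \mathbb{Z}^+$, let $\mathsf{X} \in \mathbb{R}^{n_x \times d}$ be arbitrary and let $\gamma_1, \ldots, \gamma_d > 0$. Let $\tilde{\mathsf{K}}_\nabla$ be the $n_x(d+1) \times n_x(d+1)$ modified gradient-enhanced Gaussian kernel matrix defined in the context. Then for every row index $a \in \{1, \ldots, n_x\}$, the sum of the absolute values of the off-diagonal entries of row $a$ of $\tilde{\mathsf{K}}_\nabla$ is at most $$u_{\text{G}}(n_x,d) = (n_x-1) \frac{1 + \sqrt{1 + 4d}}{2} e^{-\frac{1 + 2d - \sqrt{1 + 4d}}{4d}}.$$
   Context: Write $\tilde{x}_{ij} = \gamma_j x_{ij}$ for $1 \le i \le n_x$, $1 \le j \le d$, where $x_{ij}$ is the $(i,j)$ entry of $\mathsf{X}$, and let $\tilde{\mathbf{x}}_{i:} \in \mathbb{R}^d$ be the vector $(\tilde{x}_{i1},\ldots,\tilde{x}_{id})$. Define the $n_x\times n_x$ matrices $\mathsf{K}$ and $\tilde{\mathsf{R}}_j$ ($1\le j\le d$) by $\mathsf{K}_{ab} = \exp\!\left(-\tfrac12 \|\tilde{\mathbf{x}}_{a:} - \tilde{\mathbf{x}}_{b:}\|_2^2\right)$ and $(\tilde{\mathsf{R}}_j)_{ab} = \tilde{x}_{aj} - \tilde{x}_{bj}$. The matrix $\tilde{\mathsf{K}}_\nabla$ is the symmetric block matrix with $(d+1)\times(d+1)$ blocks of size $n_x \times n_x$, indexed by $0,1,\ldots,d$, whose blocks are: block $(0,0)$ is $\mathsf{K}$;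 block $(0,j)$ has entries $(\tilde{\mathsf{R}}_j)_{ab}\mathsf{K}_{ab}$; block $(i,0)$ has entries $-(\tilde{\mathsf{R}}_i)_{ab}\mathsf{K}_{ab}$; block $(i,j)$ for $i,j \ge 1$ has entries $\left(\delta_{ij} - (\tilde{\mathsf{R}}_i)_{ab}(\tilde{\mathsf{R}}_j)_{ab}\right)\mathsf{K}_{ab}$, where $\delta_{ij}$ is the Kronecker delta. (Equivalently, $\tilde{\mathsf{K}}_\nabla = \mathsf{P}^{-1}\mathsf{K}_\nabla\mathsf{P}^{-1}$ where $\mathsf{K}_\nabla$ is the gradient-enhanced Gaussian kernel matrix with kernel $k(\mathbf{x},\mathbf{y}) = e^{-\frac12\sum_i \gamma_i^2(x_i-y_i)^2}$ and $\mathsf{P} = \mathrm{diag}(\mathbf{1}_{n_x}, \gamma_1\mathbf{1}_{n_x},\ldots,\gamma_d\mathbf{1}_{n_x})$.) Rows $1,\ldots,n_x$ are the rows of block-row $0$. *)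

theory Defs
  imports "HOL-Analysis.Analysis"
begin

(* Matrices are indexed 1-based as in the paper: X i j for 1 <= i <= nx, 1 <= j <= d;
   gamma j for 1 <= j <= d. *)

definition xt :: "(nat \<Rightarrow> nat \<Rightarrow> real) \<Rightarrow> (nat \<Rightarrow> real) \<Rightarrow> nat \<Rightarrow> nat \<Rightarrow> real" where
  "xt X \<gamma> i j = \<gamma> j * X i j"

definition Kmat :: "nat \<Rightarrow> (nat \<Rightarrow> nat \<Rightarrow> real) \<Rightarrow> (nat \<Rightarrow> real) \<Rightarrow> nat \<Rightarrow> nat \<Rightarrow> real" where
  "Kmat d X \<gamma> a b = exp (- (1/2) * (\<Sum>j=1..d. (xt X \<gamma> a j - xt X \<gamma> b j)^2))"

definition Rmat :: "(nat \<Rightarrow> nat \<Rightarrow> real) \<Rightarrow> (nat \<Rightarrow> real) \<Rightarrow> nat \<Rightarrow> nat \<Rightarrow> nat \<Rightarrow> real" where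
  "Rmat X \<gamma> j a b = xt X \<gamma> a j - xt X \<gamma> b j"

text \<open>Entry of the modified gradient-enhanced kernel matrix in block (p,q), p,q in {0..d},
  local row a, local column b (both in {1..nx}).\<close>
definition Kgrad :: "nat \<Rightarrow> (nat \<Rightarrow> nat \<Rightarrow> real) \<Rightarrow> (nat \<Rightarrow> real) \<Rightarrow> nat \<Rightarrow> nat \<Rightarrow> nat \<Rightarrow> nat \<Rightarrow> real" where
  "Kgrad d X \<gamma> p q a b =
     (if p = 0 \<and> q = 0 then Kmat d X \<gamma> a b
      else if p = 0 then Rmat X \<gamma> q a b * Kmat d X \<gamma> a b
      else if q = 0 then - Rmat X \<gamma> p a b * Kmat d X \<gamma> a b
      else ((if p = q then 1 else 0) - Rmat X \<gamma> p a b * Rmat X \<gamma> q a b) * Kmat d X \<gamma> a b)"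

definition uG :: "nat \<Rightarrow> nat \<Rightarrow> real" where
  "uG nx d = (real nx - 1) * ((1 + sqrt (1 + 4 * real d)) / 2)
              * exp (- ((1 + 2 * real d - sqrt (1 + 4 * real d)) / (4 * real d)))"

end

theory Submission
  imports Defs
begin

text \<open>For a column \<open>b \<noteq> a\<close> the entries of row \<open>a\<close> in the \<open>d + 1\<close> blocks have absolute values
  summing to \<open>(1 + \<parallel>r\<parallel>\<^sub>1) exp (-\<parallel>r\<parallel>\<^sub>2\<^sup>2 / 2)\<close> with \<open>r = x\<^sub>a - x\<^sub>b\<close>; in column \<open>a\<close> only
  the diagonal entry is nonzero. Cauchy-Schwarz, \<open>\<parallel>r\<parallel>\<^sub>1\<^sup>2 \<le> d \<parallel>r\<parallel>\<^sub>2\<^sup>2\<close>, reduces the column bound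
  to maximising \<open>(1 + s) exp (-s\<^sup>2 / (2d))\<close> over \<open>s\<close>. The maximum is attained at the root
  \<open>s\<^sub>0 = (\<surd>(1 + 4d) - 1) / 2\<close> of \<open>s (1 + s) = d\<close> and equals the constant in \<open>uG\<close>.\<close>

lemma tilted_gaussian_le_critical:
  fixes c s s0 :: real
  assumes c: "c > 0" and s0: "s0 > 0" and crit: "s0 * (1 + s0) = c"
  shows "(1 + s) * exp (- (s\<^sup>2 / (2 * c))) \<le> (1 + s0) * exp (- (s0\<^sup>2 / (2 * c)))"
proof -
  define x where "x = (s - s0) * s0 / c"
  have "1 + s = (1 + s0) * (1 + x)"
    using s0 c crit by (simp add: x_def field_simps)
  also have "\<dots> \<le> (1 + s0) * exp x"
    using s0 exp_ge_add_one_self[of x] by (intro mult_left_mono) auto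
  finally have tangent: "1 + s \<le> (1 + s0) * exp x" .
  have "2 * s0 * (s - s0) - s\<^sup>2 \<le> - s0\<^sup>2"
    using zero_le_power2[of "s - s0"] by (simp add: power2_eq_square algebra_simps)
  then have "(2 * s0 * (s - s0) - s\<^sup>2) / (2 * c) \<le> - s0\<^sup>2 / (2 * c)"
    using c by (intro divide_right_mono) auto
  moreover have "x - s\<^sup>2 / (2 * c) = (2 * s0 * (s - s0) - s\<^sup>2) / (2 * c)"
    using c by (simp add: x_def field_simps)
  ultimately have exponent: "x - s\<^sup>2 / (2 * c) \<le> - (s0\<^sup>2 / (2 * c))"
    by simp
  have "(1 + s) * exp (- (s\<^sup>2 / (2 * c))) \<le> (1 + s0) * exp x * exp (- (s\<^sup>2 / (2 * c)))"
    using tangent by (intro mult_right_mono) auto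
  also have "\<dots> = (1 + s0) * exp (x - s\<^sup>2 / (2 * c))"
    by (simp add: exp_diff exp_minus field_simps)
  also have "\<dots> \<le> (1 + s0) * exp (- (s0\<^sup>2 / (2 * c)))"
    using s0 exponent by (intro mult_left_mono) auto
  finally show ?thesis .
qed

definition tilted_gaussian_max :: "real \<Rightarrow> real" where
  "tilted_gaussian_max c =
     ((1 + sqrt (1 + 4 * c)) / 2) * exp (- ((1 + 2 * c - sqrt (1 + 4 * c)) / (4 * c)))"

lemma tilted_gaussian_le_max:
  fixes c s :: real
  assumes c: "c > 0"
  shows "(1 + s) * exp (- (s\<^sup>2 / (2 * c))) \<le> tilted_gaussian_max c"
proof -
  define t where "t = sqrt (1 + 4 * c)"
  have t2: "t\<^sup>2 = 1 + 4 * c" and t1: "t > 1"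
    using c by (simp_all add: t_def)
  define s0 where "s0 = (t - 1) / 2"
  have s0: "s0 > 0" using t1 by (simp add: s0_def)
  have crit: "s0 * (1 + s0) = c"
    using t2 by (simp add: s0_def power2_eq_square field_simps)
  have exponent: "s0\<^sup>2 / (2 * c) = (1 + 2 * c - t) / (4 * c)"
    using c crit by (simp add: s0_def power2_eq_square field_simps)
  have factor: "1 + s0 = (1 + t) / 2" by (simp add: s0_def field_simps)
  have "(1 + s) * exp (- (s\<^sup>2 / (2 * c))) \<le> (1 + s0) * exp (- (s0\<^sup>2 / (2 * c)))"
    by (rule tilted_gaussian_le_critical[OF c s0 crit])
  also have "\<dots> = tilted_gaussian_max c"
    unfolding tilted_gaussian_max_def t_def[symmetric] exponent factor ..
  finally show ?thesis .
qed

lemma one_plus_sum_abs_mult_gaussian_le: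
  fixes r :: "'a \<Rightarrow> real"
  assumes "finite I" and "I \<noteq> {}"
  shows "(1 + (\<Sum>i\<in>I. \<bar>r i\<bar>)) * exp (- (1/2) * (\<Sum>i\<in>I. (r i)\<^sup>2))
           \<le> tilted_gaussian_max (card I)"
proof -
  define s where "s = (\<Sum>i\<in>I. \<bar>r i\<bar>)"
  have s: "s \<ge> 0" by (simp add: s_def sum_nonneg)
  have card: "real (card I) > 0" using assms by (simp add: card_gt_0_iff)
  have "s\<^sup>2 \<le> (\<Sum>i\<in>I. (r i)\<^sup>2) * card I"
    using sum_squared_le_sum_of_squares[of "\<lambda>i. \<bar>r i\<bar>" I] by (simp add: s_def)
  then have "- (1/2) * (\<Sum>i\<in>I. (r i)\<^sup>2) \<le> - (s\<^sup>2 / (2 * real (card I)))"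
    using card by (simp add: field_simps)
  then have "(1 + s) * exp (- (1/2) * (\<Sum>i\<in>I. (r i)\<^sup>2)) \<le> (1 + s) * exp (- (s\<^sup>2 / (2 * real (card I))))"
    using s by (intro mult_left_mono) auto
  also have "\<dots> \<le> tilted_gaussian_max (card I)"
    using card by (rule tilted_gaussian_le_max)
  finally show ?thesis by (simp add: s_def)
qed

lemma Kmat_eq_exp_Rmat:
  "Kmat d X \<gamma> a b = exp (- (1/2) * (\<Sum>j=1..d. (Rmat X \<gamma> j a b)\<^sup>2))"
  by (simp add: Kmat_def Rmat_def)

lemma Kgrad_first_block_row_diagonal:
  assumes "q \<noteq> 0"
  shows "Kgrad d X \<gamma> 0 q a a = 0"
  using assms by (simp add: Kgrad_def Rmat_def)

lemma sum_abs_Kgrad_first_block_row: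
  "(\<Sum>q\<in>{0..d}. \<bar>Kgrad d X \<gamma> 0 q a b\<bar>)
     = (1 + (\<Sum>j=1..d. \<bar>Rmat X \<gamma> j a b\<bar>)) * exp (- (1/2) * (\<Sum>j=1..d. (Rmat X \<gamma> j a b)\<^sup>2))"
proof -
  have "{0..d} = insert 0 {1..d}" by auto
  then have "(\<Sum>q\<in>{0..d}. \<bar>Kgrad d X \<gamma> 0 q a b\<bar>)
      = Kmat d X \<gamma> a b + (\<Sum>j=1..d. \<bar>Rmat X \<gamma> j a b\<bar> * Kmat d X \<gamma> a b)"
    by (simp add: Kgrad_def Kmat_def abs_mult)
  then show ?thesis
    by (simp add: Kmat_eq_exp_Rmat sum_distrib_right algebra_simps)
qed

theorem proposition1:
  fixes nx d :: nat and X :: "nat \<Rightarrow> nat \<Rightarrow> real" and \<gamma> :: "nat \<Rightarrow> real" and a :: nat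
  assumes "nx \<ge> 1" and "d \<ge> 1"
    and "\<forall>j\<in>{1..d}. \<gamma> j > 0"
    and "a \<in> {1..nx}"
  shows "(\<Sum>(q, b) \<in> ({0..d} \<times> {1..nx}) - {(0, a)}. \<bar>Kgrad d X \<gamma> 0 q a b\<bar>) \<le> uG nx d"
proof -
  let ?f = "\<lambda>(q, b). \<bar>Kgrad d X \<gamma> 0 q a b\<bar>"
  have split: "({0..d} \<times> {1..nx}) - {(0, a)} = ({0..d} \<times> ({1..nx} - {a})) \<union> ({1..d} \<times> {a})"
    using assms(4) by auto
  have diagonal: "sum ?f ({1..d} \<times> {a}) = 0"
    by (intro sum.neutral) (auto simp: Kgrad_first_block_row_diagonal)
  have "sum ?f (({0..d} \<times> {1..nx}) - {(0, a)}) = sum ?f ({0..d} \<times> ({1..nx} - {a}))"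
    unfolding split by (subst sum.union_disjoint) (use diagonal in auto)
  also have "\<dots> = (\<Sum>b\<in>{1..nx} - {a}. \<Sum>q\<in>{0..d}. \<bar>Kgrad d X \<gamma> 0 q a b\<bar>)"
    by (simp add: sum.cartesian_product [symmetric] sum.swap [of _ "{0..d}"])
  also have "\<dots> \<le> (\<Sum>b\<in>{1..nx} - {a}. tilted_gaussian_max d)"
    using one_plus_sum_abs_mult_gaussian_le[of "{1..d}"] assms(2)
    by (intro sum_mono) (simp add: sum_abs_Kgrad_first_block_row)
  also have "\<dots> = uG nx d"
    using assms(1,4) by (simp add: uG_def tilted_gaussian_max_def of_nat_diff)
  finally show ?thesis .
qed

end
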